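(* Let $(Q,F)$ be a finite ice quiver with $Q_0=\{1,\dots,m\}$, $F_0=\{n+1,\dots,m\}$ and Euler matrix $\widehat B=(b_{ij})$, and let $1\le v\le n$ be an unfrozen vertex not incident to loops or $2$-cycles. Let $E_v=(e_{ij})$ be the $m\times m$ matrix with $e_{ij}=\delta_{ij}$ for $j\ne v$, $e_{iv}=[b_{iv}]_+$ for $i\neq v$, and $e_{vv}=-1$. Then the Euler matrix of the extended Fomin–Zelevinsky mutation $\mu^{\mathrm{FZ}}_v(Q,F)$ equals $E_v\widehat BE_v^T$.
   Context: $[x]_+=\max\{x,0\}$. The Euler matrix of a finite ice quiver $(Q,F)$ (with $F$ the frozen subquiver): $b_{ii}=0$ for $i\le n$, $b_{ii}=1$ for $i>n$, and $b_{ij}=\#\{\text{unfrozen arrows } i\to j\}-\#\{\text{arrows } j\to i\}$ for $i\neq j$. Extended Fomin–Zelevinsky mutation $\mu^{\mathrm{FZ}}_v(Q,F)$: (1) for each pair of arrows $\alpha:u\to v$, $\beta:v\to w$ add an unfrozen arrow $u\to w$; (2) reverse all arrows incident to $v$; (3) remove a maximal collection of $2$-cycles consisting of unfrozen arrows; (4) replace each $2$-cycle in a maximal collection of $2$-cycles with exactly one frozen arrow by a frozen arrow pointing in the direction of the unfrozen arrow of that $2$-cycle. *)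

theory Defs
  imports Main
begin

text \<open>A finite ice quiver (Q,F) with Q_0 = {1..m}, F_0 = {n+1..m} is represented
  (up to isomorphism) by arrow counts: U i j = number of unfrozen arrows i \<rightarrow> j
  (arrows in Q_1 \<setminus> F_1) and Fr i j = number of frozen arrows i \<rightarrow> j (arrows of F_1).\<close>

definition ice_quiver :: "nat \<Rightarrow> nat \<Rightarrow> (nat \<Rightarrow> nat \<Rightarrow> nat) \<Rightarrow> (nat \<Rightarrow> nat \<Rightarrow> nat) \<Rightarrow> bool" where
  "ice_quiver m n U Fr \<longleftrightarrow> n \<le> m
     \<and> (\<forall>i j. U i j \<noteq> 0 \<longrightarrow> i \<in> {1..m} \<and> j \<in> {1..m})
     \<and> (\<forall>i j. Fr i j \<noteq> 0 \<longrightarrow> i \<in> {n+1..m} \<and> j \<in> {n+1..m})"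

definition arrows :: "(nat \<Rightarrow> nat \<Rightarrow> nat) \<Rightarrow> (nat \<Rightarrow> nat \<Rightarrow> nat) \<Rightarrow> nat \<Rightarrow> nat \<Rightarrow> nat" where
  "arrows U Fr i j = U i j + Fr i j"

definition euler_matrix :: "nat \<Rightarrow> (nat \<Rightarrow> nat \<Rightarrow> nat) \<Rightarrow> (nat \<Rightarrow> nat \<Rightarrow> nat) \<Rightarrow> nat \<Rightarrow> nat \<Rightarrow> int" where
  "euler_matrix n U Fr i j =
     (if i = j then (if i \<le> n then 0 else 1)
      else int (U i j) - int (arrows U Fr j i))"

definition fz_step1 :: "nat \<Rightarrow> (nat \<Rightarrow> nat \<Rightarrow> nat) \<Rightarrow> (nat \<Rightarrow> nat \<Rightarrow> nat) \<Rightarrow> nat \<Rightarrow> nat \<Rightarrow> nat" where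
  "fz_step1 v U Fr u w = U u w + arrows U Fr u v * arrows U Fr v w"

definition reverse_at :: "nat \<Rightarrow> (nat \<Rightarrow> nat \<Rightarrow> nat) \<Rightarrow> nat \<Rightarrow> nat \<Rightarrow> nat" where
  "reverse_at v A u w =
     (if u = v \<and> w = v then A v v else if u = v \<or> w = v then A w u else A u w)"

definition remove_2cycles :: "(nat \<Rightarrow> nat \<Rightarrow> nat) \<Rightarrow> nat \<Rightarrow> nat \<Rightarrow> nat" where
  "remove_2cycles A u w = (if u \<noteq> w then A u w - min (A u w) (A w u) else A u w)"

text \<open>Step (4): number of 2-cycles consisting of an unfrozen arrow u \<rightarrow> w and a frozen
  arrow w \<rightarrow> u in a maximal collection.\<close>
definition mixed_pairs :: "(nat \<Rightarrow> nat \<Rightarrow> nat) \<Rightarrow> (nat \<Rightarrow> nat \<Rightarrow> nat) \<Rightarrow> nat \<Rightarrow> nat \<Rightarrow> nat" where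
  "mixed_pairs A Fr u w = (if u \<noteq> w then min (A u w) (Fr w u) else 0)"

definition fz_mutation :: "nat \<Rightarrow> (nat \<Rightarrow> nat \<Rightarrow> nat) \<Rightarrow> (nat \<Rightarrow> nat \<Rightarrow> nat)
    \<Rightarrow> (nat \<Rightarrow> nat \<Rightarrow> nat) \<times> (nat \<Rightarrow> nat \<Rightarrow> nat)" where
  "fz_mutation v U Fr =
     (let U2 = reverse_at v (fz_step1 v U Fr);
          Fr2 = reverse_at v Fr;
          U3 = remove_2cycles U2;
          p = mixed_pairs U3 Fr2
      in (\<lambda>u w. U3 u w - p u w, \<lambda>u w. Fr2 u w - p w u + p u w))"

definition E_mat :: "nat \<Rightarrow> (nat \<Rightarrow> nat \<Rightarrow> int) \<Rightarrow> nat \<Rightarrow> nat \<Rightarrow> int" where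
  "E_mat v B i j =
     (if j \<noteq> v then (if i = j then 1 else 0)
      else if i \<noteq> v then max (B i v) 0 else -1)"

end

theory Submission
  imports Defs
begin

text \<open>Left multiplication by \<open>E\<^sub>v\<close> acts on columns as \<open>x\<^sub>i \<mapsto> x\<^sub>i + [b\<^sub>i\<^sub>v]\<^sub>+ x\<^sub>v\<close> for
  \<open>i \<noteq> v\<close> and \<open>x\<^sub>v \<mapsto> -x\<^sub>v\<close>, and right multiplication by \<open>E\<^sub>v\<^sup>T\<close> acts likewise on rows. As \<open>v\<close> is
  unfrozen, \<open>b\<^sub>v\<^sub>v = 0\<close> and \<open>b\<^sub>v\<^sub>i = -b\<^sub>i\<^sub>v\<close>, so \<open>E\<^sub>v B E\<^sub>v\<^sup>T\<close> negates row and column \<open>v\<close> and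
  adds \<open>[b\<^sub>i\<^sub>v]\<^sub>+[b\<^sub>v\<^sub>j]\<^sub>+ - [b\<^sub>j\<^sub>v]\<^sub>+[b\<^sub>v\<^sub>i]\<^sub>+\<close> to every other entry. On the quiver side, step (1) adds
  \<open>#(i\<rightarrow>v)\<cdot>#(v\<rightarrow>j)\<close> arrows \<open>i\<rightarrow>j\<close>, step (2) reverses the arrows at \<open>v\<close>, and steps (3) and (4)
  only cancel or re-label 2-cycles, which leaves the off-diagonal entries of the Euler matrix
  unchanged. Since \<open>v\<close> lies on no 2-cycle, \<open>[b\<^sub>i\<^sub>v]\<^sub>+ = #(i\<rightarrow>v)\<close> and \<open>[b\<^sub>v\<^sub>j]\<^sub>+ = #(v\<rightarrow>j)\<close>, so
  the two descriptions agree.\<close>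

lemma sum_E_mat_mult:
  assumes "i \<in> {1..m}" "v \<in> {1..m}"
  shows "(\<Sum>k\<in>{1..m}. E_mat v B i k * g k) =
    (if i = v then - g v else g i + max (B i v) 0 * g v)"
proof -
  have "(\<Sum>k\<in>{1..m}. E_mat v B i k * g k) =
      E_mat v B i v * g v + (\<Sum>k\<in>{1..m} - {v}. E_mat v B i k * g k)"
    by (rule sum.remove) (use assms in auto)
  also have "(\<Sum>k\<in>{1..m} - {v}. E_mat v B i k * g k) = (\<Sum>k\<in>{1..m} - {v}. if k = i then g k else 0)"
    by (rule sum.cong) (auto simp: E_mat_def)
  also have "\<dots> = (if i = v then 0 else g i)"
    using assms by (simp add: sum.delta)
  finally show ?thesis
    by (auto simp: E_mat_def)
qed

lemma E_mat_congruence_entry: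
  fixes B :: "nat \<Rightarrow> nat \<Rightarrow> int"
  assumes "i \<in> {1..m}" "j \<in> {1..m}" "v \<in> {1..m}"
    and "B v v = 0" and skew: "\<And>x. x \<noteq> v \<Longrightarrow> B v x = - B x v"
  shows "(\<Sum>k\<in>{1..m}. \<Sum>l\<in>{1..m}. E_mat v B i k * B k l * E_mat v B j l) =
    (if i = v then - B v j
     else if j = v then - B i v
     else B i j + max (B i v) 0 * max (B v j) 0 - max (B j v) 0 * max (B v i) 0)"
proof -
  have "(\<Sum>k\<in>{1..m}. \<Sum>l\<in>{1..m}. E_mat v B i k * B k l * E_mat v B j l) =
      (\<Sum>k\<in>{1..m}. E_mat v B i k * (\<Sum>l\<in>{1..m}. E_mat v B j l * B k l))"
    by (simp add: sum_distrib_left mult.commute mult.left_commute)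
  also have "\<dots> = (\<Sum>k\<in>{1..m}. E_mat v B i k *
      (if j = v then - B k v else B k j + max (B j v) 0 * B k v))"
    using sum_E_mat_mult[OF assms(2,3)] by simp
  also have "\<dots> = (if i = v then - (if j = v then - B v v else B v j + max (B j v) 0 * B v v)
      else (if j = v then - B i v else B i j + max (B j v) 0 * B i v)
        + max (B i v) 0 * (if j = v then - B v v else B v j + max (B j v) 0 * B v v))"
    by (rule sum_E_mat_mult[OF assms(1,3)])
  finally show ?thesis
    using assms(4) skew[of i] skew[of j] by (auto simp: max_def algebra_simps)
qed

lemma euler_matrix_diag_eq: "euler_matrix n U Fr i i = euler_matrix n U' Fr' i i"
  by (simp add: euler_matrix_def)

text \<open>Steps (3) and (4) of the mutation do not affect the off-diagonal entries: they remove
  arrows from both sides of a 2-cycle, or turn an unfrozen arrow into a frozen one.\<close>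

lemma euler_matrix_fz_mutation:
  assumes "i \<noteq> j"
  shows "euler_matrix n (fst (fz_mutation v U Fr)) (snd (fz_mutation v U Fr)) i j =
    int (reverse_at v (fz_step1 v U Fr) i j) - int (reverse_at v (fz_step1 v U Fr) j i)
      - int (reverse_at v Fr j i)"
  using assms
  unfolding euler_matrix_def fz_mutation_def Let_def arrows_def remove_2cycles_def mixed_pairs_def
  by (auto simp: of_nat_diff)

lemma euler_matrix_fz_mutation_at_unfrozen:
  assumes "i \<noteq> j" and Fr_v: "\<And>x. Fr v x = 0" "\<And>x. Fr x v = 0" and "U v v = 0"
  shows "euler_matrix n (fst (fz_mutation v U Fr)) (snd (fz_mutation v U Fr)) i j =
    (if i = v then - euler_matrix n U Fr v j
     else if j = v then - euler_matrix n U Fr i v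
     else euler_matrix n U Fr i j + int (U i v) * int (U v j) - int (U j v) * int (U v i))"
proof -
  have step1: "fz_step1 v U Fr x y = U x y + U x v * U v y" for x y
    by (simp add: fz_step1_def arrows_def Fr_v)
  show ?thesis
    unfolding euler_matrix_fz_mutation[OF \<open>i \<noteq> j\<close>]
    using assms by (simp add: step1 reverse_at_def euler_matrix_def arrows_def)
qed

lemma ice_quiver_no_frozen_arrow_at_unfrozen:
  assumes "ice_quiver m n U Fr" "v \<le> n"
  shows "Fr v x = 0" "Fr x v = 0"
  using assms unfolding ice_quiver_def by fastforce+

theorem lemma4p2:
  fixes m n v :: nat and U Fr :: "nat \<Rightarrow> nat \<Rightarrow> nat"
  assumes "ice_quiver m n U Fr"
    and "1 \<le> v" and "v \<le> n"
    and "arrows U Fr v v = 0"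
    and "\<forall>u. u \<noteq> v \<longrightarrow> arrows U Fr u v = 0 \<or> arrows U Fr v u = 0"
    and "i \<in> {1..m}" and "j \<in> {1..m}"
  shows "euler_matrix n (fst (fz_mutation v U Fr)) (snd (fz_mutation v U Fr)) i j =
    (\<Sum>k\<in>{1..m}. \<Sum>l\<in>{1..m}.
       E_mat v (euler_matrix n U Fr) i k * euler_matrix n U Fr k l * E_mat v (euler_matrix n U Fr) j l)"
proof -
  let ?B = "euler_matrix n U Fr"
  have v: "v \<in> {1..m}"
    using assms(1-3) unfolding ice_quiver_def by auto
  note Fr_v = ice_quiver_no_frozen_arrow_at_unfrozen[OF assms(1,3)]
  have U_vv: "U v v = 0"
    using assms(4) by (simp add: arrows_def)
  have B_vv: "?B v v = 0"
    using assms(3) by (simp add: euler_matrix_def)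
  have B_v: "?B x v = int (U x v) - int (U v x)" "?B v x = int (U v x) - int (U x v)"
    if "x \<noteq> v" for x
    using that by (simp_all add: euler_matrix_def arrows_def Fr_v)
  have pos_B_v: "max (?B x v) 0 = int (U x v)" "max (?B v x) 0 = int (U v x)"
    if "x \<noteq> v" for x
    using assms(5) that B_v[OF that] by (auto simp: arrows_def Fr_v)
  note congruence = E_mat_congruence_entry[where B = ?B, OF assms(6,7) v B_vv]
  show ?thesis
  proof (cases "i = j")
    case True
    have "euler_matrix n (fst (fz_mutation v U Fr)) (snd (fz_mutation v U Fr)) i i = ?B i i"
      by (rule euler_matrix_diag_eq)
    then show ?thesis
      using True congruence B_v B_vv by auto
  next
    case False
    then show ?thesis
      using congruence B_v pos_B_v
      by (simp add: euler_matrix_fz_mutation_at_unfrozen Fr_v U_vv)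
  qed
qed

end
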